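(* For any finite simple graph $X$, the increasing extended threshold GCA map $\mathbf{F}^\uparrow$ and the decreasing extended threshold GCA map $\mathbf{F}^\downarrow$ are topologically conjugate: there is a bijection $\psi:\mathcal{S}\to\mathcal{S}$ with $\psi\circ\mathbf{F}^\uparrow=\mathbf{F}^\downarrow\circ\psi$.
   Context: Let $X$ be a finite simple graph with vertices $1,\dots,n$; $d(v)$ is the degree of $v$ and $n[v]$ the closed neighborhood of $v$. An extended vertex state is $s_v=(x_v,k_v)\in\{0,1\}\times\{1,\dots,d(v)+1\}$; $\mathcal{S}=\prod_v(\{0,1\}\times\{1,\dots,d(v)+1\})$. Let $\sigma(x[v])=|\{u\in n[v]:x_u=1\}|$. Both vertex functions set $x_v'=1$ iff $\sigma(x[v])\ge k_v$ (else $0$). Increasing: $k_v'=k_v+1$ if $x_v=0$ and $\sigma(x[v])\ge k_v$, else $k_v'=k_v$. Decreasing: $k_v'=k_v-1$ if $x_v=1$ and $\sigma(x[v])<k_v$, else $k_v'=k_v$. The GCA maps $\mathbf{F}^\uparrow,\mathbf{F}^\downarrow:\mathcal{S}\to\mathcal{S}$ apply the respective vertex function at all vertices simultaneously (each using the current state). *)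

theory Defs
  imports Main
begin

definition simple_graph :: "'a set \<Rightarrow> ('a \<Rightarrow> 'a \<Rightarrow> bool) \<Rightarrow> bool" where
  "simple_graph V E \<longleftrightarrow> finite V \<and> (\<forall>u v. E u v \<longrightarrow> u \<in> V \<and> v \<in> V)
     \<and> (\<forall>u v. E u v \<longrightarrow> E v u) \<and> (\<forall>v. \<not> E v v)"

definition deg :: "'a set \<Rightarrow> ('a \<Rightarrow> 'a \<Rightarrow> bool) \<Rightarrow> 'a \<Rightarrow> nat" where
  "deg V E v = card {u \<in> V. E v u}"

definition closed_nbhd :: "'a set \<Rightarrow> ('a \<Rightarrow> 'a \<Rightarrow> bool) \<Rightarrow> 'a \<Rightarrow> 'a set" where
  "closed_nbhd V E v = {u \<in> V. u = v \<or> E v u}"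

text \<open>An extended state assigns to each vertex a pair (x_v, k_v); x_v is encoded as a
  natural number in {0,1}. Outside V the state is fixed to the dummy value (0,1),
  so that the state space is in bijection with the product over V.\<close>
type_synonym 'a ext_state = "'a \<Rightarrow> nat \<times> nat"

definition state_space :: "'a set \<Rightarrow> ('a \<Rightarrow> 'a \<Rightarrow> bool) \<Rightarrow> 'a ext_state set" where
  "state_space V E = {s. (\<forall>v \<in> V. fst (s v) \<in> {0,1} \<and> snd (s v) \<in> {1..deg V E v + 1})
                         \<and> (\<forall>v. v \<notin> V \<longrightarrow> s v = (0,1))}"

definition sigma :: "'a set \<Rightarrow> ('a \<Rightarrow> 'a \<Rightarrow> bool) \<Rightarrow> 'a ext_state \<Rightarrow> 'a \<Rightarrow> nat" where
  "sigma V E s v = card {u \<in> closed_nbhd V E v. fst (s u) = 1}"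

definition F_up :: "'a set \<Rightarrow> ('a \<Rightarrow> 'a \<Rightarrow> bool) \<Rightarrow> 'a ext_state \<Rightarrow> 'a ext_state" where
  "F_up V E s = (\<lambda>v. if v \<in> V then
      (let x = fst (s v); k = snd (s v); sg = sigma V E s v in
        (if sg \<ge> k then 1 else 0,
         if x = 0 \<and> sg \<ge> k then k + 1 else k))
     else s v)"

definition F_down :: "'a set \<Rightarrow> ('a \<Rightarrow> 'a \<Rightarrow> bool) \<Rightarrow> 'a ext_state \<Rightarrow> 'a ext_state" where
  "F_down V E s = (\<lambda>v. if v \<in> V then
      (let x = fst (s v); k = snd (s v); sg = sigma V E s v in
        (if sg \<ge> k then 1 else 0,
         if x = 1 \<and> sg < k then k - 1 else k))
     else s v)"

end

theory Submission
  imports Defs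
begin

text \<open>The conjugacy is the duality that complements every state bit and reflects every
  threshold, x \<mapsto> 1 - x and k \<mapsto> d(v) + 2 - k. Complementing the bits turns the number of
  active vertices in n[v] into \<sigma>* = d(v) + 1 - \<sigma>, so the firing condition \<sigma> \<ge> k becomes
  \<sigma>* < k*; under this translation an inactive vertex that fires and raises its threshold
  corresponds to an active vertex that goes quiet and lowers it.\<close>

definition dual_state :: "'a set \<Rightarrow> ('a \<Rightarrow> 'a \<Rightarrow> bool) \<Rightarrow> 'a ext_state \<Rightarrow> 'a ext_state" where
  "dual_state V E s = (\<lambda>v. if v \<in> V then (1 - fst (s v), deg V E v + 2 - snd (s v)) else s v)"

lemma closed_nbhd_subset: "closed_nbhd V E v \<subseteq> V"
  by (auto simp: closed_nbhd_def)

lemma finite_closed_nbhd: "finite V \<Longrightarrow> finite (closed_nbhd V E v)"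
  by (simp add: closed_nbhd_def)

lemma card_closed_nbhd:
  assumes "simple_graph V E" "v \<in> V"
  shows "card (closed_nbhd V E v) = deg V E v + 1"
proof -
  have "closed_nbhd V E v = insert v {u \<in> V. E v u}"
    using assms(2) by (auto simp: closed_nbhd_def)
  moreover have "v \<notin> {u \<in> V. E v u}" "finite V"
    using assms(1) by (simp_all add: simple_graph_def)
  ultimately show ?thesis by (simp add: deg_def)
qed

lemma sigma_le_deg:
  assumes "simple_graph V E" "v \<in> V"
  shows "sigma V E s v \<le> deg V E v + 1"
proof -
  have "finite V" using assms(1) by (simp add: simple_graph_def)
  then have "sigma V E s v \<le> card (closed_nbhd V E v)"
    unfolding sigma_def by (intro card_mono finite_closed_nbhd) auto
  then show ?thesis using card_closed_nbhd[OF assms] by simp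
qed

lemma sigma_dual_state:
  assumes "simple_graph V E" "v \<in> V" "s \<in> state_space V E"
  shows "sigma V E (dual_state V E s) v = deg V E v + 1 - sigma V E s v"
proof -
  let ?N = "closed_nbhd V E v"
  have bits: "fst (s u) \<in> {0, 1}" if "u \<in> ?N" for u
    using that closed_nbhd_subset assms(3) by (auto simp: state_space_def)
  have "{u \<in> ?N. fst (dual_state V E s u) = 1} = ?N - {u \<in> ?N. fst (s u) = 1}"
    using bits closed_nbhd_subset by (fastforce simp: dual_state_def)
  moreover have "finite ?N"
    using assms(1) by (simp add: finite_closed_nbhd simple_graph_def)
  ultimately show ?thesis
    unfolding sigma_def by (simp add: card_Diff_subset card_closed_nbhd[OF assms(1,2)])
qed

lemma dual_state_in_state_space:
  "s \<in> state_space V E \<Longrightarrow> dual_state V E s \<in> state_space V E"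
  by (auto simp: state_space_def dual_state_def)

lemma dual_state_dual_state:
  assumes "s \<in> state_space V E"
  shows "dual_state V E (dual_state V E s) = s"
proof
  fix v show "dual_state V E (dual_state V E s) v = s v"
  proof (cases "v \<in> V")
    case True
    then have "fst (s v) \<in> {0, 1}" "snd (s v) \<in> {1..deg V E v + 1}"
      using assms by (auto simp: state_space_def)
    then show ?thesis using True by (auto simp: dual_state_def prod_eq_iff)
  qed (simp add: dual_state_def)
qed

lemma bij_betw_dual_state:
  "bij_betw (dual_state V E) (state_space V E) (state_space V E)"
  by (rule bij_betw_byWitness[where f' = "dual_state V E"])
    (auto simp: dual_state_dual_state dual_state_in_state_space)

lemma F_down_dual_state_at:
  assumes "simple_graph V E" "v \<in> V" "s \<in> state_space V E"
  shows "F_down V E (dual_state V E s) v = dual_state V E (F_up V E s) v"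
proof -
  have "fst (s v) \<in> {0, 1}" "snd (s v) \<in> {1..deg V E v + 1}"
    using assms(2,3) by (auto simp: state_space_def)
  moreover have "sigma V E s v \<le> deg V E v + 1"
    using sigma_le_deg[OF assms(1,2)] .
  ultimately show ?thesis
    using assms(2) sigma_dual_state[OF assms]
    by (auto simp: dual_state_def F_up_def F_down_def Let_def)
qed

lemma dual_state_F_up:
  assumes "simple_graph V E" "s \<in> state_space V E"
  shows "dual_state V E (F_up V E s) = F_down V E (dual_state V E s)"
proof
  fix v show "dual_state V E (F_up V E s) v = F_down V E (dual_state V E s) v"
    using F_down_dual_state_at[OF assms(1) _ assms(2), of v]
    by (cases "v \<in> V") (simp_all add: dual_state_def F_up_def F_down_def)
qed

theorem corollary3p5:
  fixes V :: "'a set" and E :: "'a \<Rightarrow> 'a \<Rightarrow> bool"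
  assumes "simple_graph V E"
  shows "\<exists>\<psi>. bij_betw \<psi> (state_space V E) (state_space V E) \<and>
             (\<forall>s \<in> state_space V E. \<psi> (F_up V E s) = F_down V E (\<psi> s))"
  using bij_betw_dual_state dual_state_F_up[OF assms] by blast

end
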